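(* Let $k\ge2$, $n>2^k$, $c=2^k-2$, and assume $d=\gcd(c,n-1)>1$; let $w=(n-1)/d$ and let $y_v=0$ if $v$ is a multiple of $d$ and $y_v=\frac{1}{w(d-1)}$ otherwise, for $v\in\{0,\dots,n-1\}$. For any two disjoint intervals $[u\oplus\ell]_{n-1}$ and $[v\oplus s]_{n-1}$ (with $u,v$ nonnegative integers and $\ell,s$ nonnegative integers), $$y([u\oplus\ell]_{n-1})+y([v\oplus s]_{n-1})\le y([u\oplus(\ell+s+1)]_{n-1}).$$
   Context: For integers $u,\ell$ and $r\ge1$, $[u\oplus\ell]_r=\{w\bmod r: u\le w\le u+\ell-1\}$. For $S\subseteq\{0,\dots,n-1\}$, $y(S)=\sum_{v\in S}y_v$. *)

theory Defs
  imports Complex_Main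
begin

definition cyc_interval :: "nat \<Rightarrow> nat \<Rightarrow> nat \<Rightarrow> nat set" where
  "cyc_interval u l r = {x mod r | x. u \<le> x \<and> x < u + l}"

end

theory Submission
  imports Defs
begin

text \<open>Since \<open>d\<close> divides the modulus \<open>m = n - 1\<close>, the weight of a residue is
  \<open>0\<close> or \<open>a = 1 / (w (d - 1))\<close> according as any integer representing it is or is not
  a multiple of \<open>d\<close>. If \<open>l + s + 1 \<ge> m\<close>, the long interval is all of \<open>{0, ..., m - 1}\<close>,
  which contains the two disjoint intervals, and the weights are nonnegative; this is the
  only place where disjointness is needed. Otherwise all three intervals are images of
  integer intervals without repetition, so each weight sum is \<open>a\<close> times the number of
  non-multiples of \<open>d\<close> in an integer interval. An integer interval of length \<open>s\<close> contains
  at least \<open>\<lfloor>s/d\<rfloor>\<close> multiples of \<open>d\<close>, one of length \<open>s + 1\<close> at most \<open>\<lfloor>s/d\<rfloor> + 1\<close>.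
  Hence the last \<open>s + 1\<close> points of \<open>[u, u + l + s]\<close> contain at least as many
  non-multiples as \<open>[v, v + s - 1]\<close>, and the first \<open>l\<close> points form \<open>[u, u + l - 1]\<close>.\<close>

lemma card_multiples_lessThan:
  fixes d N :: nat
  assumes "0 < d"
  shows "card {x \<in> {..<N}. d dvd x} = (N + d - 1) div d"
proof -
  have "d * j < N \<longleftrightarrow> j < (N + d - 1) div d" for j
    using less_eq_div_iff_mult_less_eq[OF assms, of "Suc j" "N + d - 1"] assms
    by (auto simp: algebra_simps)
  then have "{j. d * j < N} = {..<(N + d - 1) div d}"
    by auto
  moreover have "{x \<in> {..<N}. d dvd x} = (*) d ` {j. d * j < N}"
    by (auto simp: dvd_def)
  ultimately show ?thesis
    using assms by (simp add: card_image inj_on_def)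
qed

lemma card_multiples_atLeastLessThan:
  fixes d u L :: nat
  assumes "0 < d"
  shows "card {x \<in> {u..<u + L}. d dvd x} = (u + d - 1 + L) div d - (u + d - 1) div d"
proof -
  have "{x \<in> {u..<u + L}. d dvd x} = {x \<in> {..<u + L}. d dvd x} - {x \<in> {..<u}. d dvd x}"
    by auto
  then have "card {x \<in> {u..<u + L}. d dvd x}
      = card {x \<in> {..<u + L}. d dvd x} - card {x \<in> {..<u}. d dvd x}"
    by (simp add: card_Diff_subset subset_eq)
  then show ?thesis
    using assms by (simp only: card_multiples_lessThan) (simp add: algebra_simps)
qed

lemma card_multiples_atLeastLessThan_ge:
  fixes d u L :: nat
  assumes "0 < d"
  shows "L div d \<le> card {x \<in> {u..<u + L}. d dvd x}"
  using div_add1_eq[of "u + d - 1" L d] assms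
  unfolding card_multiples_atLeastLessThan[OF assms] by linarith

lemma div_add_Suc_le:
  fixes A L d :: nat
  assumes "0 < d"
  shows "(A + Suc L) div d \<le> A div d + L div d + 1"
proof -
  have "A + Suc L = (A mod d + L mod d + 1) + (A div d + L div d) * d"
    by (simp add: algebra_simps)
  then have "(A + Suc L) div d = ((A mod d + L mod d + 1) + (A div d + L div d) * d) div d"
    by (simp only:)
  also have "\<dots> = (A div d + L div d) + (A mod d + L mod d + 1) div d"
    by (rule div_mult_self1) (use assms in simp)
  finally have "(A + Suc L) div d = (A div d + L div d) + (A mod d + L mod d + 1) div d" .
  moreover have "A mod d + L mod d + 1 < 2 * d"
    using mod_less_divisor[OF assms, of A] mod_less_divisor[OF assms, of L] by linarith
  then have "(A mod d + L mod d + 1) div d < 2"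
    by (rule less_mult_imp_div_less)
  ultimately show ?thesis by linarith
qed

lemma card_multiples_atLeastLessThan_Suc_le:
  fixes d u L :: nat
  assumes "0 < d"
  shows "card {x \<in> {u..<u + Suc L}. d dvd x} \<le> L div d + 1"
  using div_add_Suc_le[OF assms, of "u + d - 1" L]
  unfolding card_multiples_atLeastLessThan[OF assms] by linarith

lemma card_filter_add_card_filter_not:
  assumes "finite A"
  shows "card {x \<in> A. P x} + card {x \<in> A. \<not> P x} = card A"
  using card_Int_Diff[OF assms, of "Collect P"] by (simp add: Int_def set_diff_eq)

lemma inj_on_mod_atLeastLessThan:
  fixes m u L :: nat
  assumes "L \<le> m"
  shows "inj_on (\<lambda>x. x mod m) {u..<u + L}"
proof -
  have "x = x'" if "x mod m = x' mod m" "x \<in> {u..<u + L}" "x' \<in> {u..<u + L}" "x' \<le> x"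
    for x x'
  proof -
    have "m dvd x - x'"
      using that by (simp add: mod_eq_dvd_iff_nat)
    moreover have "x - x' < m"
      using that assms by auto
    ultimately show "x = x'"
      using that(4) nat_dvd_not_less by fastforce
  qed
  then show ?thesis
    by (intro inj_onI) (metis linorder_le_cases)
qed

lemma card_nonmultiples_atLeastLessThan_le_Suc:
  fixes d v w L :: nat
  assumes "0 < d"
  shows "card {x \<in> {v..<v + L}. \<not> d dvd x} \<le> card {x \<in> {w..<w + Suc L}. \<not> d dvd x}"
proof -
  have "card {x \<in> {v..<v + L}. d dvd x} + card {x \<in> {v..<v + L}. \<not> d dvd x} = L"
    "card {x \<in> {w..<w + Suc L}. d dvd x} + card {x \<in> {w..<w + Suc L}. \<not> d dvd x} = Suc L"
    by (simp_all only: card_filter_add_card_filter_not finite_atLeastLessThan card_atLeastLessThan)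
  then show ?thesis
    using card_multiples_atLeastLessThan_ge[OF assms, where u = v and L = L]
      card_multiples_atLeastLessThan_Suc_le[OF assms, where u = w and L = L]
    by linarith
qed

lemma card_nonmultiples_atLeastLessThan_superadditive:
  fixes d u v l s :: nat
  assumes "0 < d"
  shows "card {x \<in> {u..<u + l}. \<not> d dvd x} + card {x \<in> {v..<v + s}. \<not> d dvd x}
    \<le> card {x \<in> {u..<u + (l + s + 1)}. \<not> d dvd x}"
proof -
  have "{x \<in> {u..<u + (l + s + 1)}. \<not> d dvd x}
      = {x \<in> {u..<u + l}. \<not> d dvd x} \<union> {x \<in> {u + l..<u + l + Suc s}. \<not> d dvd x}"
    by auto
  then have "card {x \<in> {u..<u + (l + s + 1)}. \<not> d dvd x}
      = card {x \<in> {u..<u + l}. \<not> d dvd x} + card {x \<in> {u + l..<u + l + Suc s}. \<not> d dvd x}"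
    by (simp add: card_Un_disjoint disjoint_iff)
  then show ?thesis
    using card_nonmultiples_atLeastLessThan_le_Suc[OF assms, of v s "u + l"] by linarith
qed

lemma cyc_interval_eq_image: "cyc_interval u L m = (\<lambda>x. x mod m) ` {u..<u + L}"
  unfolding cyc_interval_def by auto

lemma cyc_interval_subset_lessThan: "0 < m \<Longrightarrow> cyc_interval u L m \<subseteq> {..<m}"
  unfolding cyc_interval_eq_image by auto

lemma cyc_interval_eq_lessThan:
  fixes u L m :: nat
  assumes "0 < m" "m \<le> L"
  shows "cyc_interval u L m = {..<m}"
proof -
  have "card ((\<lambda>x. x mod m) ` {u..<u + m}) = m"
    using card_image[OF inj_on_mod_atLeastLessThan[of m m u]] by simp
  then have "(\<lambda>x. x mod m) ` {u..<u + m} = {..<m}"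
    using assms(1) by (intro card_subset_eq) auto
  moreover have "(\<lambda>x. x mod m) ` {u..<u + m} \<subseteq> cyc_interval u L m"
    unfolding cyc_interval_eq_image using assms(2) by (intro image_mono) auto
  ultimately show ?thesis
    using cyc_interval_subset_lessThan[OF assms(1)] by blast
qed

lemma sum_cyc_interval_eq_card_nonmultiples:
  fixes y :: "nat \<Rightarrow> real" and a :: real and u L m d :: nat
  assumes "L \<le> m" "0 < m" "d dvd m"
    and "\<And>x. x < m \<Longrightarrow> y x = (if d dvd x then 0 else a)"
  shows "sum y (cyc_interval u L m) = a * card {x \<in> {u..<u + L}. \<not> d dvd x}"
proof -
  have "sum y (cyc_interval u L m) = (\<Sum>x\<in>{u..<u + L}. y (x mod m))"
    unfolding cyc_interval_eq_image by (simp add: sum.reindex inj_on_mod_atLeastLessThan assms(1))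
  also have "\<dots> = (\<Sum>x\<in>{u..<u + L}. if \<not> d dvd x then a else 0)"
    using assms by (intro sum.cong) (auto simp: dvd_mod_iff)
  also have "\<dots> = a * card {x \<in> {u..<u + L}. \<not> d dvd x}"
    by (simp add: sum.inter_filter[symmetric])
  finally show ?thesis .
qed

lemma sum_cyc_interval_disjoint_le:
  fixes y :: "nat \<Rightarrow> real" and a :: real and m d u v l s :: nat
  assumes "0 < m" "d dvd m" "0 \<le> a"
    and y: "\<And>x. x < m \<Longrightarrow> y x = (if d dvd x then 0 else a)"
    and disjoint: "cyc_interval u l m \<inter> cyc_interval v s m = {}"
  shows "sum y (cyc_interval u l m) + sum y (cyc_interval v s m)
    \<le> sum y (cyc_interval u (l + s + 1) m)"
proof (cases "m \<le> l + s + 1")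
  case True
  have finite: "finite (cyc_interval u' L m)" for u' L
    using cyc_interval_subset_lessThan[OF assms(1)] finite_subset by blast
  have "sum y (cyc_interval u l m) + sum y (cyc_interval v s m)
      = sum y (cyc_interval u l m \<union> cyc_interval v s m)"
    using disjoint finite by (simp add: sum.union_disjoint)
  also have "\<dots> \<le> sum y {..<m}"
    using cyc_interval_subset_lessThan[OF assms(1)] y assms(3) by (intro sum_mono2) auto
  also have "\<dots> = sum y (cyc_interval u (l + s + 1) m)"
    using cyc_interval_eq_lessThan[OF assms(1) True] by simp
  finally show ?thesis .
next
  case False
  have "0 < d"
    using assms(1,2) by (auto intro: Nat.gr0I)
  have "a * card {x \<in> {u..<u + l}. \<not> d dvd x} + a * card {x \<in> {v..<v + s}. \<not> d dvd x}
      \<le> a * card {x \<in> {u..<u + (l + s + 1)}. \<not> d dvd x}"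
    using card_nonmultiples_atLeastLessThan_superadditive[OF \<open>0 < d\<close>, of u l v s] assms(3)
    by (simp add: distrib_left[symmetric] mult_left_mono)
  moreover have "l \<le> m" "s \<le> m" "l + s + 1 \<le> m"
    using False by simp_all
  ultimately show ?thesis
    using assms(1,2) y by (simp add: sum_cyc_interval_eq_card_nonmultiples)
qed

theorem lemma3p3:
  fixes k n c d w u v l s :: nat and y :: "nat \<Rightarrow> real"
  assumes "k \<ge> 2" and "n > 2 ^ k" and "c = 2 ^ k - 2"
    and "d = gcd c (n - 1)" and "d > 1"
    and "w = (n - 1) div d"
    and "\<And>i. i < n \<Longrightarrow> y i = (if d dvd i then 0 else 1 / (real w * (real d - 1)))"
    and "cyc_interval u l (n - 1) \<inter> cyc_interval v s (n - 1) = {}"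
  shows "sum y (cyc_interval u l (n - 1)) + sum y (cyc_interval v s (n - 1))
           \<le> sum y (cyc_interval u (l + s + 1) (n - 1))"
proof (rule sum_cyc_interval_disjoint_le)
  show "0 < n - 1"
    using assms(2) one_le_power[of "2::nat" k] by linarith
  show "d dvd n - 1"
    using assms(4) by simp
  show "0 \<le> 1 / (real w * (real d - 1))"
    using assms(5) by simp
  show "y x = (if d dvd x then 0 else 1 / (real w * (real d - 1)))" if "x < n - 1" for x
    using assms(7) that by simp
qed (fact assms(8))

end
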